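(* Let $(V,P)$ be an irreducible, reversible Markov process on a finite state space $V$ with stationary distribution $\pi$. Let $\xi\in\mathbb{R}^V$ with $\sum_{v\in V}\xi_v=0$, let $D=\mathrm{diag}(\pi)$ and $\widetilde{\xi}=D^{-1/2}\xi$. Then: (1) for every integer $t\geq 1$, $R_{\mathrm{eff}}(P;\xi)\leq t\cdot R_{\mathrm{eff}}(P^t;\xi)$; (2) if $\delta$ is the spectral gap of $P$, then $R_{\mathrm{eff}}(P;\xi)\leq \|\widetilde{\xi}\|_2^2/\delta$.
   Context: A Markov process $(V,P)$ has a row-stochastic transition matrix $P\in\mathbb{R}_{\ge 0}^{V\times V}$; it is irreducible if for all $v,w$ some power $P^t$ has $(P^t)_{vw}>0$ (then its stationary distribution $\pi=\pi P$ is unique and positive), and a process $Q$ is reversible with respect to $\pi$ if $\pi_vQ_{vw}=\pi_wQ_{wv}$ for all $v,w$ (if $P$ is, so is $P^t$). For a process $Q$ reversible with respect to $\pi$, associate the undirected graph on $V$ with an edge $\{v,w\}$ whenever $Q_{vw}>0$, with resistance $r_{\{v,w\}}=1/(\pi_vQ_{vw})$; each edge gets an arbitrary orientation. A flow is $f:E\to\mathbb{R}$ with net-flow $\delta_f(v)=\sum_{e\text{ out of }v}f_e-\sum_{e\text{ into }v}f_e$ and energy $\sum_e r_ef_e^2$. $R_{\mathrm{eff}}(Q;\xi)$ is the minimum energy of a flow with net-flow $\xi$ in this graph (taken to be $+\infty$ if no such flow exists). The spectral gap of $P$ is $\delta=1-\max\{\lambda:\lambda\text{ an eigenvalue of }P,\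 \lambda<1\}$, i.e. every eigenvalue $\lambda<1$ of $P$ satisfies $\lambda\le 1-\delta$. *)

theory Defs
  imports "HOL-Analysis.Analysis"
begin

definition mat_mul :: "('v::finite \<Rightarrow> 'v \<Rightarrow> real) \<Rightarrow> ('v \<Rightarrow> 'v \<Rightarrow> real) \<Rightarrow> 'v \<Rightarrow> 'v \<Rightarrow> real" where
  "mat_mul A B = (\<lambda>v w. \<Sum>u\<in>UNIV. A v u * B u w)"

primrec mat_pow :: "('v::finite \<Rightarrow> 'v \<Rightarrow> real) \<Rightarrow> nat \<Rightarrow> 'v \<Rightarrow> 'v \<Rightarrow> real" where
  "mat_pow A 0 = (\<lambda>v w. if v = w then 1 else 0)"
| "mat_pow A (Suc n) = mat_mul (mat_pow A n) A"

definition row_stochastic :: "('v::finite \<Rightarrow> 'v \<Rightarrow> real) \<Rightarrow> bool" where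
  "row_stochastic P \<longleftrightarrow> (\<forall>v w. P v w \<ge> 0) \<and> (\<forall>v. (\<Sum>w\<in>UNIV. P v w) = 1)"

definition irreducible :: "('v::finite \<Rightarrow> 'v \<Rightarrow> real) \<Rightarrow> bool" where
  "irreducible P \<longleftrightarrow> (\<forall>v w. \<exists>t. mat_pow P t v w > 0)"

definition stationary_dist :: "('v::finite \<Rightarrow> 'v \<Rightarrow> real) \<Rightarrow> ('v \<Rightarrow> real) \<Rightarrow> bool" where
  "stationary_dist P \<pi> \<longleftrightarrow> (\<forall>v. \<pi> v \<ge> 0) \<and> (\<Sum>v\<in>UNIV. \<pi> v) = 1 \<and>
     (\<forall>w. (\<Sum>v\<in>UNIV. \<pi> v * P v w) = \<pi> w)"

definition reversible :: "('v::finite \<Rightarrow> 'v \<Rightarrow> real) \<Rightarrow> ('v \<Rightarrow> real) \<Rightarrow> bool" where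
  "reversible Q \<pi> \<longleftrightarrow> (\<forall>v w. \<pi> v * Q v w = \<pi> w * Q w v)"

text \<open>Flows on the graph of Q: edges are the unordered pairs {v,w}, v ~= w, with Q v w > 0
  (loops carry no net flow and are omitted). A flow with an arbitrary orientation is
  represented as an antisymmetric function f (f v w is the flow from v to w along edge {v,w}),
  vanishing off edges.\<close>
definition is_flow :: "('v::finite \<Rightarrow> 'v \<Rightarrow> real) \<Rightarrow> ('v \<Rightarrow> 'v \<Rightarrow> real) \<Rightarrow> bool" where
  "is_flow Q f \<longleftrightarrow> (\<forall>v w. f v w = - f w v) \<and> (\<forall>v w. f v w \<noteq> 0 \<longrightarrow> v \<noteq> w \<and> Q v w > 0)"

definition net_flow :: "('v::finite \<Rightarrow> 'v \<Rightarrow> real) \<Rightarrow> 'v \<Rightarrow> real" where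
  "net_flow f v = (\<Sum>w\<in>UNIV. f v w)"

text \<open>Energy: sum over unordered edges of r_e f_e^2 with r_{v,w} = 1/(pi v Q v w);
  every edge appears twice among the ordered pairs, hence the factor 1/2.\<close>
definition energy :: "('v::finite \<Rightarrow> 'v \<Rightarrow> real) \<Rightarrow> ('v \<Rightarrow> real) \<Rightarrow> ('v \<Rightarrow> 'v \<Rightarrow> real) \<Rightarrow> real" where
  "energy Q \<pi> f = (1/2) * (\<Sum>(v,w)\<in>{(v,w). v \<noteq> w \<and> Q v w > 0}. (f v w)\<^sup>2 / (\<pi> v * Q v w))"

text \<open>Effective resistance; the infimum over the empty set is +infinity.\<close>
definition R_eff :: "('v::finite \<Rightarrow> 'v \<Rightarrow> real) \<Rightarrow> ('v \<Rightarrow> real) \<Rightarrow> ('v \<Rightarrow> real) \<Rightarrow> ereal" where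
  "R_eff Q \<pi> \<xi> = (INF f\<in>{f. is_flow Q f \<and> (\<forall>v. net_flow f v = \<xi> v)}. ereal (energy Q \<pi> f))"

definition is_eigenvalue :: "('v::finite \<Rightarrow> 'v \<Rightarrow> real) \<Rightarrow> real \<Rightarrow> bool" where
  "is_eigenvalue P lam \<longleftrightarrow> (\<exists>x::'v \<Rightarrow> real. (\<exists>v. x v \<noteq> 0) \<and> (\<forall>v. (\<Sum>w\<in>UNIV. P v w * x w) = lam * x v))"

definition spectral_gap :: "('v::finite \<Rightarrow> 'v \<Rightarrow> real) \<Rightarrow> real" where
  "spectral_gap P = 1 - Max {lam. is_eigenvalue P lam \<and> lam < 1}"

end

(*
  Write <x, y> for the inner product weighted by pi and D(x) = <x, x - P x> for the Dirichlet
  form; reversibility makes P self-adjoint for <_, _>.  Since the entries of xi sum to zero and P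
  is irreducible, the Poisson equation pi (u - P u) = xi has a solution u.  The current
  pi v * P v w * (u v - u w) has net flow xi and energy D(u) = sum_v xi v * u v, so
  R_eff(P; xi) <= D(u).  Conversely, every potential w bounds the energy of every flow with net
  flow xi from below by 2 * sum_v xi v * w v - D_Q(w) (the easy half of Thomson's principle).

  (1) Telescoping with self-adjointness gives D_{P^t}(u) <= t * D(u); the potential u / t then
  shows R_eff(P^t; xi) >= D(u) / t.
  (2) The Rayleigh quotient D(f) / <f, f> on functions orthogonal to the constants attains its
  minimum mu at an eigenvector of eigenvalue 1 - mu, hence delta <= mu.  Therefore
  delta <u, u> <= D(u) = <u, xi / pi>, and Cauchy-Schwarz gives D(u) <= |xi / sqrt pi|^2 / delta.
*)
theory Submission
  imports Defs
begin

lemma two_mult_le_sq_div_add_mult_sq: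
  fixes h d c :: real
  assumes "c > 0"
  shows "2 * h * d \<le> h\<^sup>2 / c + c * d\<^sup>2"
proof -
  have "0 \<le> (h - c * d)\<^sup>2 / c"
    using assms by simp
  also have "\<dots> = h\<^sup>2 / c + c * d\<^sup>2 - 2 * h * d"
    using assms by (simp add: field_simps power2_eq_square)
  finally show ?thesis by simp
qed

lemma quadratic_nonneg_imp_linear_coeff_0:
  fixes B C :: real
  assumes "\<And>s. 0 \<le> 2 * s * B + s\<^sup>2 * C"
  shows "B = 0"
proof (rule ccontr)
  assume "B \<noteq> 0"
  define k where "k = \<bar>C\<bar> + 1"
  have k: "k > 0" "C - 2 * k < 0"
    unfolding k_def by auto
  have "2 * (- B / k) * B + (- B / k)\<^sup>2 * C = B\<^sup>2 * (C - 2 * k) / k\<^sup>2"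
    using k by (simp add: field_simps power2_eq_square)
  also have "\<dots> < 0"
    using \<open>B \<noteq> 0\<close> k by (simp add: divide_neg_pos mult_pos_neg)
  finally show False
    using assms[of "- B / k"] by simp
qed

section \<open>The weighted inner product and the Dirichlet form\<close>

definition mat_vec :: "('v::finite \<Rightarrow> 'v \<Rightarrow> real) \<Rightarrow> ('v \<Rightarrow> real) \<Rightarrow> 'v \<Rightarrow> real" where
  "mat_vec Q x = (\<lambda>v. \<Sum>w\<in>UNIV. Q v w * x w)"

definition pinner :: "('v::finite \<Rightarrow> real) \<Rightarrow> ('v \<Rightarrow> real) \<Rightarrow> ('v \<Rightarrow> real) \<Rightarrow> real" where
  "pinner \<pi> x y = (\<Sum>v\<in>UNIV. \<pi> v * x v * y v)"

definition dirichlet :: "('v::finite \<Rightarrow> 'v \<Rightarrow> real) \<Rightarrow> ('v \<Rightarrow> real) \<Rightarrow> ('v \<Rightarrow> real) \<Rightarrow> real" where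
  "dirichlet Q \<pi> x = (1/2) * (\<Sum>v\<in>UNIV. \<Sum>w\<in>UNIV. \<pi> v * Q v w * (x v - x w)\<^sup>2)"

lemma pinner_commute: "pinner \<pi> x y = pinner \<pi> y x"
  unfolding pinner_def by (simp add: ac_simps)

lemma pinner_add_left: "pinner \<pi> (\<lambda>v. x v + y v) z = pinner \<pi> x z + pinner \<pi> y z"
  unfolding pinner_def by (simp add: algebra_simps sum.distrib)

lemma pinner_diff_left: "pinner \<pi> (\<lambda>v. x v - y v) z = pinner \<pi> x z - pinner \<pi> y z"
  unfolding pinner_def by (simp add: algebra_simps sum_subtractf)

lemma pinner_scale_left: "pinner \<pi> (\<lambda>v. c * x v) z = c * pinner \<pi> x z"
  unfolding pinner_def by (simp add: algebra_simps sum_distrib_left)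

lemma pinner_add_right: "pinner \<pi> z (\<lambda>v. x v + y v) = pinner \<pi> z x + pinner \<pi> z y"
  by (simp add: pinner_commute[of \<pi> z] pinner_add_left)

lemma pinner_diff_right: "pinner \<pi> z (\<lambda>v. x v - y v) = pinner \<pi> z x - pinner \<pi> z y"
  by (simp add: pinner_commute[of \<pi> z] pinner_diff_left)

lemma pinner_scale_right: "pinner \<pi> z (\<lambda>v. c * x v) = c * pinner \<pi> z x"
  by (simp add: pinner_commute[of \<pi> z] pinner_scale_left)

lemma pinner_self_nonneg: "(\<And>v. \<pi> v \<ge> 0) \<Longrightarrow> pinner \<pi> x x \<ge> 0"
  unfolding pinner_def by (intro sum_nonneg) (simp add: mult.assoc)

lemma pinner_self_eq_0_iff:
  assumes "\<And>v. \<pi> v > 0"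
  shows "pinner \<pi> x x = 0 \<longleftrightarrow> x = (\<lambda>_. 0)"
proof -
  have "pinner \<pi> x x = 0 \<longleftrightarrow> (\<forall>v. \<pi> v * x v * x v = 0)"
    unfolding pinner_def using assms
    by (subst sum_nonneg_eq_0_iff) (auto simp: mult.assoc less_imp_le)
  also have "\<dots> \<longleftrightarrow> x = (\<lambda>_. 0)"
    using assms by (auto simp: fun_eq_iff) (metis less_irrefl)
  finally show ?thesis .
qed

lemma pinner_le_div_of_coercive:
  assumes "\<And>v. \<pi> v \<ge> 0" and "\<delta> > 0" and "\<delta> * pinner \<pi> u u \<le> pinner \<pi> u g"
  shows "pinner \<pi> u g \<le> pinner \<pi> g g / \<delta>"
proof -
  have "0 \<le> pinner \<pi> (\<lambda>v. \<delta> * u v - g v) (\<lambda>v. \<delta> * u v - g v)"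
    using assms(1) by (rule pinner_self_nonneg)
  also have "\<dots> = \<delta> * (\<delta> * pinner \<pi> u u) - 2 * \<delta> * pinner \<pi> u g + pinner \<pi> g g"
    using pinner_commute[of \<pi> g u]
    by (simp add: pinner_diff_left pinner_diff_right pinner_scale_left pinner_scale_right
        algebra_simps)
  also have "\<dots> \<le> \<delta> * pinner \<pi> u g - 2 * \<delta> * pinner \<pi> u g + pinner \<pi> g g"
    using assms(2,3) by simp
  finally show ?thesis
    using assms(2) by (simp add: pos_le_divide_eq mult.commute)
qed

lemma mat_vec_add: "mat_vec Q (\<lambda>v. x v + y v) = (\<lambda>v. mat_vec Q x v + mat_vec Q y v)"
  unfolding mat_vec_def by (simp add: algebra_simps sum.distrib)

lemma mat_vec_diff: "mat_vec Q (\<lambda>v. x v - y v) = (\<lambda>v. mat_vec Q x v - mat_vec Q y v)"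
  unfolding mat_vec_def by (simp add: algebra_simps sum_subtractf)

lemma mat_vec_scale: "mat_vec Q (\<lambda>v. c * x v) = (\<lambda>v. c * mat_vec Q x v)"
  unfolding mat_vec_def by (simp add: algebra_simps sum_distrib_left)

lemma mat_vec_mat_mul: "mat_vec (mat_mul A B) x = mat_vec A (mat_vec B x)"
proof
  fix v
  have "mat_vec (mat_mul A B) x v = (\<Sum>w\<in>UNIV. \<Sum>u\<in>UNIV. A v u * B u w * x w)"
    unfolding mat_vec_def mat_mul_def by (simp add: sum_distrib_right)
  also have "\<dots> = (\<Sum>u\<in>UNIV. \<Sum>w\<in>UNIV. A v u * B u w * x w)"
    by (rule sum.swap)
  also have "\<dots> = mat_vec A (mat_vec B x) v"
    unfolding mat_vec_def by (simp add: sum_distrib_left mult.assoc)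
  finally show "mat_vec (mat_mul A B) x v = mat_vec A (mat_vec B x) v" .
qed

lemma mat_vec_mat_pow: "mat_vec (mat_pow Q k) = mat_vec Q ^^ k"
proof (induction k)
  case 0
  show ?case by (simp add: fun_eq_iff mat_vec_def mult_delta_left)
next
  case (Suc k)
  show ?case by (simp add: fun_eq_iff mat_vec_mat_mul Suc funpow_Suc_right del: funpow.simps)
qed

lemma sum_weighted_mat_vec:
  assumes "stationary_dist Q \<pi>"
  shows "(\<Sum>v\<in>UNIV. \<pi> v * mat_vec Q x v) = (\<Sum>v\<in>UNIV. \<pi> v * x v)"
proof -
  have "(\<Sum>v\<in>UNIV. \<pi> v * mat_vec Q x v) = (\<Sum>w\<in>UNIV. \<Sum>v\<in>UNIV. \<pi> v * Q v w * x w)"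
    unfolding mat_vec_def by (subst sum.swap) (simp add: sum_distrib_left mult.assoc)
  also have "\<dots> = (\<Sum>w\<in>UNIV. \<pi> w * x w)"
    using assms by (simp add: stationary_dist_def flip: sum_distrib_right)
  finally show ?thesis .
qed

lemma is_eigenvalue_iff:
  "is_eigenvalue Q lam \<longleftrightarrow> (\<exists>x. x \<noteq> (\<lambda>_. 0) \<and> mat_vec Q x = (\<lambda>v. lam * x v))"
  by (simp add: is_eigenvalue_def mat_vec_def fun_eq_iff)

lemma mat_pow_nonneg: "row_stochastic Q \<Longrightarrow> mat_pow Q k v w \<ge> 0"
  by (induction k arbitrary: w)
    (auto simp: row_stochastic_def mat_mul_def intro!: sum_nonneg)

lemma row_stochastic_mat_pow:
  assumes "row_stochastic Q"
  shows "row_stochastic (mat_pow Q k)"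
proof -
  have "mat_vec (mat_pow Q k) (\<lambda>_. 1) = (\<lambda>_. 1)"
    unfolding mat_vec_mat_pow
    by (induction k) (use assms in \<open>simp_all add: row_stochastic_def mat_vec_def\<close>)
  then show ?thesis
    using mat_pow_nonneg[OF assms] by (simp add: row_stochastic_def mat_vec_def fun_eq_iff)
qed

lemma stationary_dist_mat_pow:
  assumes "stationary_dist Q \<pi>"
  shows "stationary_dist (mat_pow Q k) \<pi>"
proof -
  have "(\<Sum>v\<in>UNIV. \<pi> v * mat_pow Q k v w) = \<pi> w" for w
  proof (induction k arbitrary: w)
    case 0
    show ?case by (simp add: if_distrib cong: if_cong)
  next
    case (Suc k)
    have "(\<Sum>v\<in>UNIV. \<pi> v * mat_pow Q (Suc k) v w)
        = (\<Sum>u\<in>UNIV. (\<Sum>v\<in>UNIV. \<pi> v * mat_pow Q k v u) * Q u w)"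
      unfolding mat_pow.simps mat_mul_def sum_distrib_left sum_distrib_right
      by (subst sum.swap) (simp add: mult.assoc)
    then show ?case using assms by (simp add: Suc stationary_dist_def)
  qed
  then show ?thesis using assms by (simp add: stationary_dist_def)
qed

lemma stationary_dist_pos:
  assumes "row_stochastic Q" and "irreducible Q" and "stationary_dist Q \<pi>"
  shows "\<pi> v > 0"
proof -
  have "\<not> (\<forall>u. \<pi> u \<le> 0)"
    using assms(3) sum_nonpos[of UNIV \<pi>] by (auto simp: stationary_dist_def)
  then obtain u where u: "\<pi> u > 0"
    by (auto simp: not_le)
  obtain t where t: "mat_pow Q t u v > 0"
    using assms(2) by (auto simp: irreducible_def)
  have "0 < \<pi> u * mat_pow Q t u v"
    using u t by simp
  also have "\<dots> \<le> (\<Sum>x\<in>UNIV. \<pi> x * mat_pow Q t x v)"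
    using assms(3) mat_pow_nonneg[OF assms(1)]
    by (intro member_le_sum) (auto simp: stationary_dist_def)
  also have "\<dots> = \<pi> v"
    using stationary_dist_mat_pow[OF assms(3), of t] by (simp add: stationary_dist_def)
  finally show ?thesis .
qed

lemma double_sum_quadratic_expansion:
  assumes "row_stochastic Q" and "stationary_dist Q \<pi>"
  shows "(\<Sum>v\<in>UNIV. \<Sum>w\<in>UNIV. \<pi> v * Q v w * (x v + s * x w)\<^sup>2)
    = (1 + s\<^sup>2) * pinner \<pi> x x + 2 * s * pinner \<pi> x (mat_vec Q x)"
proof -
  have rows: "(\<Sum>w\<in>UNIV. Q v w) = 1" for v
    using assms(1) by (simp add: row_stochastic_def)
  have cols: "(\<Sum>v\<in>UNIV. \<pi> v * Q v w) = \<pi> w" for w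
    using assms(2) by (simp add: stationary_dist_def)
  have source: "(\<Sum>v\<in>UNIV. \<Sum>w\<in>UNIV. \<pi> v * Q v w * (x v)\<^sup>2) = pinner \<pi> x x"
    by (simp add: pinner_def power2_eq_square mult.commute mult.left_commute rows
        flip: sum_distrib_left)
  have "(\<Sum>v\<in>UNIV. \<Sum>w\<in>UNIV. \<pi> v * Q v w * (x w)\<^sup>2)
      = (\<Sum>w\<in>UNIV. (\<Sum>v\<in>UNIV. \<pi> v * Q v w) * (x w)\<^sup>2)"
    by (subst sum.swap) (simp add: sum_distrib_right)
  then have target: "(\<Sum>v\<in>UNIV. \<Sum>w\<in>UNIV. \<pi> v * Q v w * (x w)\<^sup>2) = pinner \<pi> x x"
    by (simp add: cols pinner_def power2_eq_square mult.assoc)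
  have cross: "(\<Sum>v\<in>UNIV. \<Sum>w\<in>UNIV. \<pi> v * Q v w * (x v * x w)) = pinner \<pi> x (mat_vec Q x)"
    by (simp add: pinner_def mat_vec_def sum_distrib_left ac_simps)
  have "\<pi> v * Q v w * (x v + s * x w)\<^sup>2 = \<pi> v * Q v w * (x v)\<^sup>2
      + s\<^sup>2 * (\<pi> v * Q v w * (x w)\<^sup>2) + 2 * s * (\<pi> v * Q v w * (x v * x w))" for v w
    by (simp add: power2_eq_square algebra_simps)
  then show ?thesis
    by (simp add: sum.distrib source target cross flip: sum_distrib_left)
      (simp add: algebra_simps)
qed

lemma dirichlet_eq_pinner:
  assumes "row_stochastic Q" and "stationary_dist Q \<pi>"
  shows "dirichlet Q \<pi> x = pinner \<pi> x x - pinner \<pi> x (mat_vec Q x)"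
  using double_sum_quadratic_expansion[OF assms, of x "-1"] by (simp add: dirichlet_def)

lemma dirichlet_nonneg:
  assumes "row_stochastic Q" and "stationary_dist Q \<pi>"
  shows "dirichlet Q \<pi> x \<ge> 0"
  using assms unfolding dirichlet_def row_stochastic_def stationary_dist_def
  by (intro mult_nonneg_nonneg sum_nonneg) auto

lemma pinner_add_mat_vec_nonneg:
  assumes "row_stochastic Q" and "stationary_dist Q \<pi>"
  shows "pinner \<pi> x x + pinner \<pi> x (mat_vec Q x) \<ge> 0"
proof -
  have "0 \<le> (\<Sum>v\<in>UNIV. \<Sum>w\<in>UNIV. \<pi> v * Q v w * (x v + 1 * x w)\<^sup>2)"
    using assms unfolding row_stochastic_def stationary_dist_def by (intro sum_nonneg) auto
  then show ?thesis
    unfolding double_sum_quadratic_expansion[OF assms] by simp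
qed

lemma dirichlet_scale: "dirichlet Q \<pi> (\<lambda>v. c * x v) = c\<^sup>2 * dirichlet Q \<pi> x"
  unfolding dirichlet_def by (simp add: sum_distrib_left power2_eq_square algebra_simps)

lemma pinner_mat_vec_commute:
  assumes "reversible Q \<pi>"
  shows "pinner \<pi> (mat_vec Q x) y = pinner \<pi> x (mat_vec Q y)"
proof -
  have "pinner \<pi> (mat_vec Q x) y = (\<Sum>v\<in>UNIV. \<Sum>w\<in>UNIV. \<pi> w * Q w v * x w * y v)"
    using assms by (simp add: pinner_def mat_vec_def reversible_def sum_distrib_left
        sum_distrib_right ac_simps)
  also have "\<dots> = pinner \<pi> x (mat_vec Q y)"
    by (subst sum.swap) (simp add: pinner_def mat_vec_def sum_distrib_left ac_simps)
  finally show ?thesis .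
qed

lemma pinner_eigenvectors_orthogonal:
  assumes "reversible Q \<pi>"
    and "mat_vec Q x = (\<lambda>v. a * x v)" and "mat_vec Q y = (\<lambda>v. b * y v)" and "a \<noteq> b"
  shows "pinner \<pi> x y = 0"
proof -
  have "a * pinner \<pi> x y = b * pinner \<pi> x y"
    using pinner_mat_vec_commute[OF assms(1), of x y]
    by (simp add: assms(2,3) pinner_scale_left pinner_scale_right)
  then show ?thesis
    using assms(4) by simp
qed

section \<open>Flows and effective resistance\<close>

lemma sum_pairs_eq_double_sum:
  fixes f :: "'v::finite \<Rightarrow> 'v \<Rightarrow> 'a::comm_monoid_add"
  shows "(\<Sum>(v, w)\<in>{(v, w). p v w}. f v w) = (\<Sum>v\<in>UNIV. \<Sum>w\<in>UNIV. if p v w then f v w else 0)"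
proof -
  have "(\<Sum>(v, w)\<in>{(v, w). p v w}. f v w) = (\<Sum>(v, w)\<in>UNIV. if p v w then f v w else 0)"
    by (rule sum.mono_neutral_cong_left) (auto split: if_splits)
  then show ?thesis
    by (simp add: sum.cartesian_product flip: UNIV_Times_UNIV)
qed

definition potential_flow ::
    "('v::finite \<Rightarrow> 'v \<Rightarrow> real) \<Rightarrow> ('v \<Rightarrow> real) \<Rightarrow> ('v \<Rightarrow> real) \<Rightarrow> 'v \<Rightarrow> 'v \<Rightarrow> real" where
  "potential_flow Q \<pi> u = (\<lambda>v w. \<pi> v * Q v w * (u v - u w))"

lemma is_flow_potential_flow:
  assumes "reversible Q \<pi>" and "\<And>v w. Q v w \<ge> 0"
  shows "is_flow Q (potential_flow Q \<pi> u)"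
proof -
  have "\<pi> v * Q v w * (u v - u w) = - (\<pi> w * Q w v * (u w - u v))" for v w
    using assms(1) by (simp add: reversible_def algebra_simps)
  moreover have "v \<noteq> w \<and> Q v w > 0" if "\<pi> v * Q v w * (u v - u w) \<noteq> 0" for v w
    using that assms(2)[of v w] by (auto simp: order_le_less)
  ultimately show ?thesis
    unfolding is_flow_def potential_flow_def by blast
qed

lemma net_flow_potential_flow:
  assumes "row_stochastic Q"
  shows "net_flow (potential_flow Q \<pi> u) v = \<pi> v * (u v - mat_vec Q u v)"
  using assms
  by (simp add: net_flow_def potential_flow_def mat_vec_def row_stochastic_def algebra_simps
      sum_subtractf flip: sum_distrib_left sum_distrib_right)

lemma energy_potential_flow:
  assumes "\<And>v. \<pi> v > 0" and "\<And>v w. Q v w \<ge> 0"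
  shows "energy Q \<pi> (potential_flow Q \<pi> u) = dirichlet Q \<pi> u"
proof -
  have "(if v \<noteq> w \<and> Q v w > 0 then (potential_flow Q \<pi> u v w)\<^sup>2 / (\<pi> v * Q v w) else 0)
      = \<pi> v * Q v w * (u v - u w)\<^sup>2" for v w
    using assms(1)[of v] assms(2)[of v w]
    by (auto simp: potential_flow_def power2_eq_square order_le_less)
  then show ?thesis
    by (simp add: energy_def dirichlet_def sum_pairs_eq_double_sum)
qed

lemma R_eff_le_dirichlet:
  assumes "row_stochastic Q" and "reversible Q \<pi>" and "\<And>v. \<pi> v > 0"
    and "\<And>v. \<pi> v * (u v - mat_vec Q u v) = \<xi> v"
  shows "R_eff Q \<pi> \<xi> \<le> ereal (dirichlet Q \<pi> u)"
proof -
  have nonneg: "\<And>v w. Q v w \<ge> 0"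
    using assms(1) by (simp add: row_stochastic_def)
  show ?thesis
    unfolding R_eff_def energy_potential_flow[OF assms(3) nonneg, symmetric]
    using assms by (intro INF_lower)
      (simp add: is_flow_potential_flow nonneg net_flow_potential_flow)
qed

lemma sum_net_flow_times_potential:
  assumes "is_flow Q h"
  shows "2 * (\<Sum>v\<in>UNIV. net_flow h v * w v) = (\<Sum>v\<in>UNIV. \<Sum>x\<in>UNIV. h v x * (w v - w x))"
proof -
  have antisym: "h x v = - h v x" for v x
    using assms unfolding is_flow_def by blast
  have "h v x * (w v - w x) = h v x * w v + h x v * w x" for v x
    by (simp add: antisym[of v x] algebra_simps)
  then have "(\<Sum>v\<in>UNIV. \<Sum>x\<in>UNIV. h v x * (w v - w x))
      = (\<Sum>v\<in>UNIV. \<Sum>x\<in>UNIV. h v x * w v) + (\<Sum>x\<in>UNIV. \<Sum>v\<in>UNIV. h x v * w x)"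
    by (simp add: sum.distrib sum.swap[of "\<lambda>v x. h x v * w x"])
  then show ?thesis
    by (simp add: net_flow_def sum_distrib_right)
qed

lemma dual_le_energy:
  assumes "\<And>v. \<pi> v > 0" and "\<And>v w. Q v w \<ge> 0" and "is_flow Q h"
  shows "2 * (\<Sum>v\<in>UNIV. net_flow h v * w v) - dirichlet Q \<pi> w \<le> energy Q \<pi> h"
proof -
  define edge_term where "edge_term v x =
    (if v \<noteq> x \<and> Q v x > 0 then (h v x)\<^sup>2 / (\<pi> v * Q v x) else 0)" for v x
  have "2 * (h v x * (w v - w x)) \<le> edge_term v x + \<pi> v * Q v x * (w v - w x)\<^sup>2" for v x
  proof (cases "v \<noteq> x \<and> Q v x > 0")
    case True
    then show ?thesis
      using two_mult_le_sq_div_add_mult_sq[of "\<pi> v * Q v x" "h v x" "w v - w x"] assms(1)[of v]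
      by (simp add: edge_term_def)
  next
    case False
    then have "h v x = 0"
      using assms(3) unfolding is_flow_def by blast
    then show ?thesis
      using assms(1)[of v] assms(2)[of v x] False by (simp add: edge_term_def less_imp_le)
  qed
  then have "2 * (\<Sum>v\<in>UNIV. \<Sum>x\<in>UNIV. h v x * (w v - w x))
      \<le> (\<Sum>v\<in>UNIV. \<Sum>x\<in>UNIV. edge_term v x) + (\<Sum>v\<in>UNIV. \<Sum>x\<in>UNIV. \<pi> v * Q v x * (w v - w x)\<^sup>2)"
    by (simp add: sum_distrib_left sum_mono flip: sum.distrib)
  then show ?thesis
    using sum_net_flow_times_potential[OF assms(3), of w]
    by (simp add: energy_def dirichlet_def sum_pairs_eq_double_sum edge_term_def)
qed

lemma dual_le_R_eff:
  assumes "\<And>v. \<pi> v > 0" and "\<And>v w. Q v w \<ge> 0"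
  shows "ereal (2 * (\<Sum>v\<in>UNIV. \<xi> v * w v) - dirichlet Q \<pi> w) \<le> R_eff Q \<pi> \<xi>"
  unfolding R_eff_def
proof (rule INF_greatest)
  fix h
  assume "h \<in> {f. is_flow Q f \<and> (\<forall>v. net_flow f v = \<xi> v)}"
  then show "ereal (2 * (\<Sum>v\<in>UNIV. \<xi> v * w v) - dirichlet Q \<pi> w) \<le> ereal (energy Q \<pi> h)"
    using dual_le_energy[of \<pi> Q h w] assms by auto
qed

locale reversible_chain =
  fixes P :: "'v::finite \<Rightarrow> 'v \<Rightarrow> real" and \<pi> :: "'v \<Rightarrow> real"
  assumes stochastic: "row_stochastic P"
    and stationary: "stationary_dist P \<pi>"
    and reversible: "reversible P \<pi>"
begin

lemma pi_sum: "(\<Sum>v\<in>UNIV. \<pi> v) = 1"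
  using stationary by (simp add: stationary_dist_def)


lemma pinner_funpow_commute:
  "pinner \<pi> ((mat_vec P ^^ k) x) y = pinner \<pi> x ((mat_vec P ^^ k) y)"
proof (induction k arbitrary: y)
  case 0
  show ?case by simp
next
  case (Suc k)
  have "pinner \<pi> ((mat_vec P ^^ Suc k) x) y = pinner \<pi> ((mat_vec P ^^ k) x) (mat_vec P y)"
    by (simp add: pinner_mat_vec_commute[OF reversible])
  also have "\<dots> = pinner \<pi> x ((mat_vec P ^^ Suc k) y)"
    by (simp add: Suc funpow_Suc_right del: funpow.simps)
  finally show ?case .
qed

text \<open>With \<open>y = x - P x\<close>, the decrease \<open>dirichlet P \<pi> x - dirichlet P \<pi> (P x)\<close> equals
  \<open>pinner \<pi> y y + pinner \<pi> y (P y)\<close>, which is nonnegative because \<open>I + P\<close> is positive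
  semidefinite.\<close>
lemma dirichlet_mat_vec_le: "dirichlet P \<pi> (mat_vec P x) \<le> dirichlet P \<pi> x"
proof -
  define y where "y = (\<lambda>v. x v - mat_vec P x v)"
  have "0 \<le> pinner \<pi> y y + pinner \<pi> y (mat_vec P y)"
    by (rule pinner_add_mat_vec_nonneg[OF stochastic stationary])
  moreover have "pinner \<pi> x (mat_vec P (mat_vec P x)) = pinner \<pi> (mat_vec P x) (mat_vec P x)"
    by (simp add: pinner_mat_vec_commute[OF reversible])
  ultimately show ?thesis
    using pinner_commute[of \<pi> "mat_vec P x" x]
    unfolding dirichlet_eq_pinner[OF stochastic stationary] y_def mat_vec_diff
    by (simp add: pinner_diff_left pinner_diff_right)
qed

lemma dirichlet_funpow_le: "dirichlet P \<pi> ((mat_vec P ^^ m) x) \<le> dirichlet P \<pi> x"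
  by (induction m) (auto intro: order_trans[OF dirichlet_mat_vec_le])

lemma pinner_funpow_add:
  "pinner \<pi> u ((mat_vec P ^^ (i + j)) u) = pinner \<pi> ((mat_vec P ^^ i) u) ((mat_vec P ^^ j) u)"
  by (simp add: funpow_add pinner_funpow_commute)

lemma pinner_mat_vec_decrement_le:
  "pinner \<pi> x (mat_vec P x) - pinner \<pi> (mat_vec P x) (mat_vec P x) \<le> dirichlet P \<pi> x"
proof -
  have "0 \<le> pinner \<pi> (\<lambda>v. x v - mat_vec P x v) (\<lambda>v. x v - mat_vec P x v)"
    using stationary by (intro pinner_self_nonneg) (simp add: stationary_dist_def)
  then show ?thesis
    using pinner_commute[of \<pi> "mat_vec P x" x]
    by (simp add: dirichlet_eq_pinner[OF stochastic stationary] pinner_diff_left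
        pinner_diff_right)
qed

text \<open>For \<open>k = 2 m\<close> or \<open>k = 2 m + 1\<close>, self-adjointness turns the decrement into
  \<open>dirichlet P \<pi> y\<close> or \<open>pinner \<pi> y (P y) - pinner \<pi> (P y) (P y)\<close> with \<open>y = P\<^sup>m u\<close>.\<close>
lemma pinner_funpow_decrement_le:
  "pinner \<pi> u ((mat_vec P ^^ k) u) - pinner \<pi> u ((mat_vec P ^^ Suc k) u) \<le> dirichlet P \<pi> u"
proof -
  define m where "m = k div 2"
  define y where "y = (mat_vec P ^^ m) u"
  have "k = m + m \<or> k = Suc (m + m)"
    unfolding m_def by presburger
  then show ?thesis
  proof
    assume k: "k = m + m"
    have "pinner \<pi> u ((mat_vec P ^^ k) u) = pinner \<pi> y y"
      using pinner_funpow_add[of u m m] by (simp add: k y_def)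
    moreover have "pinner \<pi> u ((mat_vec P ^^ Suc k) u) = pinner \<pi> y (mat_vec P y)"
      using pinner_funpow_add[of u m "Suc m"] by (simp add: k y_def)
    ultimately show ?thesis
      using dirichlet_funpow_le[of m u] dirichlet_eq_pinner[OF stochastic stationary, of y]
      by (simp add: y_def)
  next
    assume k: "k = Suc (m + m)"
    have "pinner \<pi> u ((mat_vec P ^^ k) u) = pinner \<pi> y (mat_vec P y)"
      using pinner_funpow_add[of u m "Suc m"] by (simp add: k y_def)
    moreover have "pinner \<pi> u ((mat_vec P ^^ Suc k) u) = pinner \<pi> (mat_vec P y) (mat_vec P y)"
      using pinner_funpow_add[of u "Suc m" "Suc m"] by (simp add: k y_def)
    ultimately show ?thesis
      using pinner_mat_vec_decrement_le[of y] dirichlet_funpow_le[of m u] by (simp add: y_def)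
  qed
qed

lemma dirichlet_mat_pow_le: "dirichlet (mat_pow P t) \<pi> u \<le> real t * dirichlet P \<pi> u"
proof -
  have "pinner \<pi> u u - pinner \<pi> u ((mat_vec P ^^ t) u) \<le> real t * dirichlet P \<pi> u"
  proof (induction t)
    case 0
    show ?case by simp
  next
    case (Suc t)
    with pinner_funpow_decrement_le[of u t] show ?case
      by (simp add: distrib_right)
  qed
  moreover have "dirichlet (mat_pow P t) \<pi> u = pinner \<pi> u u - pinner \<pi> u ((mat_vec P ^^ t) u)"
    using dirichlet_eq_pinner[OF row_stochastic_mat_pow[OF stochastic]
        stationary_dist_mat_pow[OF stationary]]
    by (simp only: mat_vec_mat_pow)
  ultimately show ?thesis by simp
qed

lemma dirichlet_add_scale:
  "dirichlet P \<pi> (\<lambda>v. x v + s * z v)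
    = dirichlet P \<pi> x + 2 * s * pinner \<pi> (\<lambda>v. x v - mat_vec P x v) z + s\<^sup>2 * dirichlet P \<pi> z"
  using pinner_mat_vec_commute[OF reversible, of x z] pinner_commute[of \<pi> z "mat_vec P x"]
    pinner_commute[of \<pi> z x]
  by (simp add: dirichlet_eq_pinner[OF stochastic stationary] mat_vec_add mat_vec_scale
      pinner_add_left pinner_add_right pinner_scale_left pinner_scale_right pinner_diff_left
      power2_eq_square algebra_simps)

lemma sum_times_poisson_solution:
  assumes "\<And>v. \<pi> v * (u v - mat_vec P u v) = \<xi> v"
  shows "(\<Sum>v\<in>UNIV. \<xi> v * u v) = dirichlet P \<pi> u"
proof -
  have "(\<Sum>v\<in>UNIV. \<xi> v * u v) = pinner \<pi> (\<lambda>v. u v - mat_vec P u v) u"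
    by (simp add: pinner_def flip: assms)
  then show ?thesis
    using pinner_commute[of \<pi> "mat_vec P u" u]
    by (simp add: pinner_diff_left dirichlet_eq_pinner[OF stochastic stationary])
qed

end

locale irreducible_chain = reversible_chain P \<pi>
  for P :: "'v::finite \<Rightarrow> 'v \<Rightarrow> real" and \<pi> +
  assumes irreducible: "irreducible P"
begin

lemma pi_pos: "\<pi> v > 0"
  using stationary_dist_pos[OF stochastic irreducible stationary] .

lemma pinner_self_pos:
  assumes "x \<noteq> (\<lambda>_. 0)"
  shows "pinner \<pi> x x > 0"
proof -
  have "pinner \<pi> x x \<ge> 0"
    using pi_pos by (intro pinner_self_nonneg) (simp add: less_imp_le)
  moreover have "pinner \<pi> x x \<noteq> 0"
    using assms by (simp add: pinner_self_eq_0_iff pi_pos)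
  ultimately show ?thesis by simp
qed

lemma dirichlet_eq_0_imp_constant:
  assumes "dirichlet P \<pi> x = 0"
  shows "x v = x w"
proof -
  have nonneg: "0 \<le> \<pi> v * P v w * (x v - x w)\<^sup>2" for v w
    using pi_pos[of v] stochastic by (simp add: row_stochastic_def less_imp_le)
  have "(\<Sum>v\<in>UNIV. \<Sum>w\<in>UNIV. \<pi> v * P v w * (x v - x w)\<^sup>2) = 0"
    using assms by (simp add: dirichlet_def)
  then have zero_terms: "\<forall>v w. \<pi> v * P v w * (x v - x w)\<^sup>2 = 0"
    by (simp add: sum_nonneg_eq_0_iff sum_nonneg nonneg)
  have edge: "x v = x w" if "P v w > 0" for v w
    using zero_terms[rule_format, of v w] that pi_pos[of v] by auto
  have "x v = x w" if "mat_pow P t v w > 0" for t w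
    using that
  proof (induction t arbitrary: w)
    case 0
    then show ?case by (simp split: if_splits)
  next
    case (Suc t)
    then have "0 < (\<Sum>u\<in>UNIV. mat_pow P t v u * P u w)"
      by (simp add: mat_mul_def)
    then obtain u where "mat_pow P t v u * P u w > 0"
      by (metis (no_types, lifting) not_le sum_nonpos)
    moreover have "mat_pow P t v u \<ge> 0" and "P u w \<ge> 0"
      using mat_pow_nonneg[OF stochastic] stochastic by (simp_all add: row_stochastic_def)
    ultimately have "mat_pow P t v u > 0" and "P u w > 0"
      by (metis less_eq_real_def mult_eq_0_iff less_irrefl)+
    then show ?case
      using Suc.IH edge by metis
  qed
  then show ?thesis
    using irreducible unfolding irreducible_def by blast
qed

lemma dirichlet_eq_0_imp_zero:
  assumes "(\<Sum>v\<in>UNIV. \<pi> v * x v) = 0" and "dirichlet P \<pi> x = 0"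
  shows "x = (\<lambda>_. 0)"
proof
  fix w
  have "0 = (\<Sum>v\<in>UNIV. \<pi> v * x v)"
    using assms(1) by simp
  also have "\<dots> = (\<Sum>v\<in>UNIV. \<pi> v * x w)"
    using dirichlet_eq_0_imp_constant[OF assms(2)] by (intro sum.cong refl) metis
  also have "\<dots> = x w"
    by (simp add: pi_sum flip: sum_distrib_right)
  finally show "x w = 0" by simp
qed

text \<open>By irreducibility the kernel of \<open>I - P\<close> consists of the constants; adding the
  \<open>\<pi>\<close>-mean makes the map injective, hence surjective.\<close>
lemma poisson_equation_solvable:
  assumes "(\<Sum>v\<in>UNIV. \<pi> v * g v) = 0"
  obtains u where "\<And>v. u v - mat_vec P u v = g v" and "(\<Sum>v\<in>UNIV. \<pi> v * u v) = 0"
proof -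
  define L :: "real^'v \<Rightarrow> real^'v" where
    "L x = (\<chi> v. x $ v - mat_vec P (vec_nth x) v + (\<Sum>w\<in>UNIV. \<pi> w * x $ w))" for x
  have mean: "(\<Sum>v\<in>UNIV. \<pi> v * (f v - mat_vec P f v + c)) = c" for f c
    using sum_weighted_mat_vec[OF stationary, of f]
    by (simp add: distrib_left right_diff_distrib sum.distrib sum_subtractf pi_sum
        flip: sum_distrib_right)
  have L_solution: "(\<Sum>w\<in>UNIV. \<pi> w * x $ w) = (\<Sum>v\<in>UNIV. \<pi> v * h v)
      \<and> (\<forall>v. x $ v - mat_vec P (vec_nth x) v = h v - (\<Sum>v\<in>UNIV. \<pi> v * h v))"
    if "L x = (\<chi> v. h v)" for x h
  proof -
    define c where "c = (\<Sum>w\<in>UNIV. \<pi> w * x $ w)"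
    have eq: "x $ v - mat_vec P (vec_nth x) v + c = h v" for v
      using that by (simp add: L_def c_def vec_eq_iff)
    have "c = (\<Sum>v\<in>UNIV. \<pi> v * h v)"
      using mean[of "vec_nth x" c] by (simp add: eq)
    then show ?thesis
      using eq by (simp add: c_def algebra_simps)
  qed
  have "linear L"
    by (rule linearI)
      (simp_all add: L_def mat_vec_def vec_eq_iff algebra_simps sum.distrib sum_distrib_left)
  moreover have "inj L"
    unfolding linear_inj_iff_eq_0[OF \<open>linear L\<close>]
  proof (intro allI impI)
    fix x
    assume "L x = 0"
    then have "L x = (\<chi> v. 0)"
      by (simp add: vec_eq_iff)
    then have centered: "(\<Sum>w\<in>UNIV. \<pi> w * x $ w) = 0" and "mat_vec P (vec_nth x) = vec_nth x"
      using L_solution[of x "\<lambda>_. 0"] by (auto simp: fun_eq_iff)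
    then have "dirichlet P \<pi> (vec_nth x) = 0"
      by (simp add: dirichlet_eq_pinner[OF stochastic stationary])
    then have "vec_nth x = (\<lambda>_. 0)"
      using centered by (intro dirichlet_eq_0_imp_zero) simp_all
    then show "x = 0"
      by (simp add: vec_eq_iff fun_eq_iff)
  qed
  ultimately obtain x where "L x = (\<chi> v. g v)"
    by (metis linear_inj_imp_surj surjE)
  then show ?thesis
    using L_solution[of x g] assms by (intro that[of "vec_nth x"]) auto
qed

lemma poisson_potential_exists:
  assumes "(\<Sum>v\<in>UNIV. \<xi> v) = 0"
  obtains u where "\<And>v. \<pi> v * (u v - mat_vec P u v) = \<xi> v" and "(\<Sum>v\<in>UNIV. \<pi> v * u v) = 0"
proof -
  have pi_nonzero: "\<pi> v \<noteq> 0" for v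
    using pi_pos[of v] by simp
  obtain u where u: "\<And>v. u v - mat_vec P u v = \<xi> v / \<pi> v"
    and centered: "(\<Sum>v\<in>UNIV. \<pi> v * u v) = 0"
    using poisson_equation_solvable[of "\<lambda>v. \<xi> v / \<pi> v"] assms by (auto simp: pi_nonzero)
  have "\<pi> v * (u v - mat_vec P u v) = \<xi> v" for v
    by (simp add: u pi_nonzero)
  from this centered show ?thesis
    by (rule that)
qed

lemma rayleigh_minimizer_eigenvector:
  assumes poincare: "\<And>f. (\<Sum>v\<in>UNIV. \<pi> v * f v) = 0 \<Longrightarrow> \<mu> * pinner \<pi> f f \<le> dirichlet P \<pi> f"
    and centered: "(\<Sum>v\<in>UNIV. \<pi> v * x v) = 0"
    and equality: "dirichlet P \<pi> x = \<mu> * pinner \<pi> x x"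
  shows "mat_vec P x = (\<lambda>v. (1 - \<mu>) * x v)"
proof -
  define r where "r v = x v - mat_vec P x v - \<mu> * x v" for v
  have r_inner: "pinner \<pi> r z = pinner \<pi> (\<lambda>v. x v - mat_vec P x v) z - \<mu> * pinner \<pi> x z" for z
    unfolding r_def by (simp add: pinner_diff_left pinner_scale_left)
  have first_order: "pinner \<pi> r z = 0" if z: "(\<Sum>v\<in>UNIV. \<pi> v * z v) = 0" for z
  proof (rule quadratic_nonneg_imp_linear_coeff_0)
    fix s :: real
    have "(\<Sum>v\<in>UNIV. \<pi> v * (x v + s * z v)) = 0"
      using centered z
      by (simp add: distrib_left sum.distrib mult.left_commute flip: sum_distrib_left)
    then have "\<mu> * pinner \<pi> (\<lambda>v. x v + s * z v) (\<lambda>v. x v + s * z v)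
        \<le> dirichlet P \<pi> (\<lambda>v. x v + s * z v)"
      by (rule poincare)
    moreover have "pinner \<pi> (\<lambda>v. x v + s * z v) (\<lambda>v. x v + s * z v)
        = pinner \<pi> x x + 2 * s * pinner \<pi> x z + s\<^sup>2 * pinner \<pi> z z"
      using pinner_commute[of \<pi> z x]
      by (simp add: pinner_add_left pinner_add_right pinner_scale_left pinner_scale_right
          power2_eq_square algebra_simps)
    ultimately show "0 \<le> 2 * s * pinner \<pi> r z + s\<^sup>2 * (dirichlet P \<pi> z - \<mu> * pinner \<pi> z z)"
      unfolding dirichlet_add_scale r_inner equality by (simp add: algebra_simps)
  qed
  have "(\<Sum>v\<in>UNIV. \<pi> v * r v) = 0"
    using centered sum_weighted_mat_vec[OF stationary, of x]
    by (simp add: r_def right_diff_distrib sum_subtractf mult.left_commute flip: sum_distrib_left)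
  then have "pinner \<pi> r r = 0"
    by (rule first_order)
  then have "r = (\<lambda>_. 0)"
    by (simp add: pinner_self_eq_0_iff pi_pos)
  then show ?thesis
    by (auto simp: r_def fun_eq_iff algebra_simps)
qed

lemma rayleigh_quotient_minimizer_exists:
  assumes "\<exists>y. (\<Sum>v\<in>UNIV. \<pi> v * y v) = 0 \<and> y \<noteq> (\<lambda>_. 0)"
  obtains x where "(\<Sum>v\<in>UNIV. \<pi> v * x v) = 0" and "x \<noteq> (\<lambda>_. 0)"
    and "\<And>f. (\<Sum>v\<in>UNIV. \<pi> v * f v) = 0 \<Longrightarrow> f \<noteq> (\<lambda>_. 0) \<Longrightarrow>
      dirichlet P \<pi> x / pinner \<pi> x x \<le> dirichlet P \<pi> f / pinner \<pi> f f"
proof -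
  define R where "R f = dirichlet P \<pi> f / pinner \<pi> f f" for f
  define K where "K = sphere (0::real^'v) 1 \<inter> {x. (\<Sum>v\<in>UNIV. \<pi> v * x $ v) = 0}"
  have "compact K"
    unfolding K_def by (intro compact_Int_closed compact_sphere closed_Collect_eq continuous_intros)
  have K_nonzero: "vec_nth x \<noteq> (\<lambda>_. 0)" if "x \<in> K" for x
  proof -
    have "x \<noteq> 0"
      using that by (auto simp: K_def)
    then show ?thesis
      by (auto simp: vec_eq_iff fun_eq_iff)
  qed
  have R_scale: "R (\<lambda>v. c * f v) = R f" if "c \<noteq> 0" for c f
    using that by (simp add: R_def dirichlet_scale pinner_scale_left pinner_scale_right
        power2_eq_square)
  have normalize: "(1 / norm (\<chi> v. f v)) *\<^sub>R (\<chi> v. f v) \<in> K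
      \<and> R (vec_nth ((1 / norm (\<chi> v. f v)) *\<^sub>R (\<chi> v. f v))) = R f"
    if "(\<Sum>v\<in>UNIV. \<pi> v * f v) = 0" and "f \<noteq> (\<lambda>_. 0)" for f
  proof -
    define c where "c = 1 / norm (\<chi> v. f v)"
    have "(\<chi> v. f v) \<noteq> 0"
      using that(2) by (auto simp: vec_eq_iff fun_eq_iff)
    then have "c \<noteq> 0" and "norm (c *\<^sub>R (\<chi> v. f v)) = 1"
      by (simp_all add: c_def)
    moreover have "vec_nth (c *\<^sub>R (\<chi> v. f v)) = (\<lambda>v. c * f v)"
      by (simp add: fun_eq_iff)
    ultimately show ?thesis
      using that(1) R_scale[of c f]
      by (simp add: K_def c_def flip: sum_divide_distrib)
  qed
  obtain y where y: "(\<Sum>v\<in>UNIV. \<pi> v * y v) = 0" "y \<noteq> (\<lambda>_. 0)"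
    using assms by blast
  then have "K \<noteq> {}"
    using normalize by blast
  moreover have "continuous_on K (\<lambda>x. R (vec_nth x))"
    unfolding R_def dirichlet_def pinner_def
    using pinner_self_pos[OF K_nonzero] unfolding pinner_def
    by (intro continuous_intros) fastforce
  ultimately obtain x0 where "x0 \<in> K" and x0_min: "\<And>x. x \<in> K \<Longrightarrow> R (vec_nth x0) \<le> R (vec_nth x)"
    using continuous_attains_inf[OF \<open>compact K\<close>] by blast
  show ?thesis
  proof (rule that)
    show "(\<Sum>v\<in>UNIV. \<pi> v * vec_nth x0 v) = 0"
      using \<open>x0 \<in> K\<close> by (simp add: K_def)
    show "vec_nth x0 \<noteq> (\<lambda>_. 0)"
      using K_nonzero[OF \<open>x0 \<in> K\<close>] .
    show "dirichlet P \<pi> (vec_nth x0) / pinner \<pi> (vec_nth x0) (vec_nth x0)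
        \<le> dirichlet P \<pi> f / pinner \<pi> f f"
      if "(\<Sum>v\<in>UNIV. \<pi> v * f v) = 0" and "f \<noteq> (\<lambda>_. 0)" for f
      using normalize[OF that] x0_min unfolding R_def by metis
  qed
qed

lemma poincare_eigenvalue_exists:
  assumes "\<exists>y. (\<Sum>v\<in>UNIV. \<pi> v * y v) = 0 \<and> y \<noteq> (\<lambda>_. 0)"
  obtains \<mu> where "\<mu> > 0" and "is_eigenvalue P (1 - \<mu>)"
    and "\<And>f. (\<Sum>v\<in>UNIV. \<pi> v * f v) = 0 \<Longrightarrow> \<mu> * pinner \<pi> f f \<le> dirichlet P \<pi> f"
proof -
  obtain x where centered: "(\<Sum>v\<in>UNIV. \<pi> v * x v) = 0" and "x \<noteq> (\<lambda>_. 0)"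
    and minimal: "\<And>f. (\<Sum>v\<in>UNIV. \<pi> v * f v) = 0 \<Longrightarrow> f \<noteq> (\<lambda>_. 0) \<Longrightarrow>
      dirichlet P \<pi> x / pinner \<pi> x x \<le> dirichlet P \<pi> f / pinner \<pi> f f"
    using rayleigh_quotient_minimizer_exists[OF assms] by blast
  define \<mu> where "\<mu> = dirichlet P \<pi> x / pinner \<pi> x x"
  have x_pos: "pinner \<pi> x x > 0"
    using pinner_self_pos[OF \<open>x \<noteq> (\<lambda>_. 0)\<close>] .
  have "dirichlet P \<pi> x \<noteq> 0"
    using dirichlet_eq_0_imp_zero[OF centered] \<open>x \<noteq> (\<lambda>_. 0)\<close> by blast
  then have "dirichlet P \<pi> x > 0"
    using dirichlet_nonneg[OF stochastic stationary, of x] by simp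
  then have "\<mu> > 0"
    using x_pos by (simp add: \<mu>_def)
  moreover have poincare: "\<mu> * pinner \<pi> f f \<le> dirichlet P \<pi> f"
    if "(\<Sum>v\<in>UNIV. \<pi> v * f v) = 0" for f
  proof (cases "f = (\<lambda>_. 0)")
    case True
    then show ?thesis by (simp add: pinner_def dirichlet_def)
  next
    case False
    then show ?thesis
      using minimal[OF that False] pinner_self_pos[OF False]
      by (simp add: \<mu>_def pos_le_divide_eq)
  qed
  moreover have "mat_vec P x = (\<lambda>v. (1 - \<mu>) * x v)"
    using poincare centered x_pos by (intro rayleigh_minimizer_eigenvector) (simp_all add: \<mu>_def)
  then have "is_eigenvalue P (1 - \<mu>)"
    using \<open>x \<noteq> (\<lambda>_. 0)\<close> by (auto simp: is_eigenvalue_iff)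
  ultimately show ?thesis
    using that by blast
qed

text \<open>Eigenvectors of distinct eigenvalues are \<open>\<pi>\<close>-orthogonal, so after rescaling by
  \<open>sqrt \<pi>\<close> they form an orthogonal, hence independent, family in a finite-dimensional space.\<close>
lemma finite_eigenvalues: "finite {lam. is_eigenvalue P lam}"
proof -
  define S where "S = {lam. is_eigenvalue P lam}"
  have "\<forall>lam\<in>S. \<exists>x. x \<noteq> (\<lambda>_. 0) \<and> mat_vec P x = (\<lambda>v. lam * x v)"
    by (simp add: S_def is_eigenvalue_iff)
  then obtain e where e_nonzero: "\<And>lam. lam \<in> S \<Longrightarrow> e lam \<noteq> (\<lambda>_. 0)"
    and e_eigen: "\<And>lam. lam \<in> S \<Longrightarrow> mat_vec P (e lam) = (\<lambda>v. lam * e lam v)"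
    by metis
  define \<phi> where "\<phi> lam = (\<chi> v. sqrt (\<pi> v) * e lam v)" for lam
  have sqrt_pi: "sqrt (\<pi> v) * a * (sqrt (\<pi> v) * b) = \<pi> v * a * b" for v a b
    using pi_pos[of v] by (simp add: ac_simps flip: mult.assoc[of "sqrt (\<pi> v)"])
  have inner_\<phi>: "\<phi> a \<bullet> \<phi> b = pinner \<pi> (e a) (e b)" for a b
    by (simp add: \<phi>_def inner_vec_def pinner_def sqrt_pi)
  have \<phi>_pos: "\<phi> a \<bullet> \<phi> a > 0" if "a \<in> S" for a
    using pinner_self_pos[OF e_nonzero[OF that]] by (simp add: inner_\<phi>)
  have \<phi>_orth: "\<phi> a \<bullet> \<phi> b = 0" if "a \<in> S" "b \<in> S" "a \<noteq> b" for a b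
    using pinner_eigenvectors_orthogonal[OF reversible e_eigen e_eigen] that by (simp add: inner_\<phi>)
  have "inj_on \<phi> S"
    using \<phi>_pos \<phi>_orth by (metis inj_onI less_irrefl)
  moreover have "independent (\<phi> ` S)"
  proof (rule pairwise_orthogonal_independent)
    show "pairwise orthogonal (\<phi> ` S)"
      using \<phi>_orth by (auto simp: pairwise_def orthogonal_def)
    show "0 \<notin> \<phi> ` S"
      using \<phi>_pos by fastforce
  qed
  then have "finite (\<phi> ` S)"
    using independent_bound by blast
  ultimately show ?thesis
    unfolding S_def[symmetric] using finite_imageD by blast
qed

lemma spectral_gap_poincare:
  assumes "\<exists>y. (\<Sum>v\<in>UNIV. \<pi> v * y v) = 0 \<and> y \<noteq> (\<lambda>_. 0)"
  shows "spectral_gap P > 0"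
    and "(\<Sum>v\<in>UNIV. \<pi> v * f v) = 0 \<Longrightarrow> spectral_gap P * pinner \<pi> f f \<le> dirichlet P \<pi> f"
proof -
  obtain \<mu> where "\<mu> > 0" and eigen: "is_eigenvalue P (1 - \<mu>)"
    and poincare: "\<And>f. (\<Sum>v\<in>UNIV. \<pi> v * f v) = 0 \<Longrightarrow> \<mu> * pinner \<pi> f f \<le> dirichlet P \<pi> f"
    using poincare_eigenvalue_exists[OF assms] by blast
  define EV where "EV = {lam. is_eigenvalue P lam \<and> lam < 1}"
  have "finite EV"
    unfolding EV_def by (rule finite_subset[OF _ finite_eigenvalues]) auto
  moreover have "1 - \<mu> \<in> EV"
    using eigen \<open>\<mu> > 0\<close> by (simp add: EV_def)
  ultimately have "Max EV \<in> EV" and max_ge: "1 - \<mu> \<le> Max EV"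
    by (auto intro: Max_in)
  then have "Max EV < 1"
    by (simp add: EV_def)
  with max_ge have gap: "0 < spectral_gap P" "spectral_gap P \<le> \<mu>"
    by (simp_all add: spectral_gap_def EV_def[symmetric])
  then show "spectral_gap P > 0"
    by simp
  show "spectral_gap P * pinner \<pi> f f \<le> dirichlet P \<pi> f" if "(\<Sum>v\<in>UNIV. \<pi> v * f v) = 0"
    using mult_right_mono[OF gap(2) pinner_self_nonneg[of \<pi> f]] poincare[OF that] pi_pos
    by (simp add: less_imp_le)
qed

theorem R_eff_le_mult_R_eff_mat_pow:
  assumes "(\<Sum>v\<in>UNIV. \<xi> v) = 0" and "t \<ge> 1"
  shows "R_eff P \<pi> \<xi> \<le> ereal (real t) * R_eff (mat_pow P t) \<pi> \<xi>"
proof -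
  obtain u where u: "\<And>v. \<pi> v * (u v - mat_vec P u v) = \<xi> v"
    using poisson_potential_exists[OF assms(1)] by blast
  define a where "a = dirichlet P \<pi> u"
  define w where "w = (\<lambda>v. (1 / real t) * u v)"
  have t: "real t > 0"
    using assms(2) by simp
  have "2 * (\<Sum>v\<in>UNIV. \<xi> v * w v) = 2 * a / real t"
    using sum_times_poisson_solution[OF u]
    by (simp add: w_def a_def flip: sum_divide_distrib)
  moreover have "dirichlet (mat_pow P t) \<pi> w \<le> a / real t"
    using mult_left_mono[OF dirichlet_mat_pow_le[of t u], of "(1 / real t)\<^sup>2"] t
    unfolding w_def dirichlet_scale a_def by (simp add: power2_eq_square)
  ultimately have "ereal (a / real t)
      \<le> ereal (2 * (\<Sum>v\<in>UNIV. \<xi> v * w v) - dirichlet (mat_pow P t) \<pi> w)"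
    by simp
  also have "\<dots> \<le> R_eff (mat_pow P t) \<pi> \<xi>"
    using pi_pos mat_pow_nonneg[OF stochastic] by (rule dual_le_R_eff)
  finally have "ereal (real t) * ereal (a / real t) \<le> ereal (real t) * R_eff (mat_pow P t) \<pi> \<xi>"
    by (rule ereal_mult_left_mono) simp
  moreover have "R_eff P \<pi> \<xi> \<le> ereal a"
    unfolding a_def using stochastic reversible pi_pos u by (rule R_eff_le_dirichlet)
  ultimately show ?thesis
    using t by simp
qed

theorem R_eff_le_spectral_gap:
  assumes "(\<Sum>v\<in>UNIV. \<xi> v) = 0"
  shows "R_eff P \<pi> \<xi> \<le> ereal ((\<Sum>v\<in>UNIV. (\<xi> v / sqrt (\<pi> v))\<^sup>2) / spectral_gap P)"
proof -
  obtain u where u: "\<And>v. \<pi> v * (u v - mat_vec P u v) = \<xi> v"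
    and centered: "(\<Sum>v\<in>UNIV. \<pi> v * u v) = 0"
    using poisson_potential_exists[OF assms] by blast
  define g where "g v = \<xi> v / \<pi> v" for v
  have pi_g: "\<pi> v * g v = \<xi> v" for v
    using pi_pos[of v] by (simp add: g_def)
  have dirichlet_u: "dirichlet P \<pi> u = pinner \<pi> u g"
    using sum_times_poisson_solution[OF u] by (simp add: pinner_def pi_g ac_simps flip: pi_g)
  have "dirichlet P \<pi> u \<le> pinner \<pi> g g / spectral_gap P"
  proof (cases "\<xi> = (\<lambda>_. 0)")
    case True
    then show ?thesis
      by (simp add: dirichlet_u pinner_def g_def)
  next
    case False
    then have "(\<Sum>v\<in>UNIV. \<pi> v * g v) = 0 \<and> g \<noteq> (\<lambda>_. 0)"
      using assms by (auto simp: pi_g fun_eq_iff simp flip: pi_g)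
    then have "spectral_gap P > 0" and "spectral_gap P * pinner \<pi> u u \<le> pinner \<pi> u g"
      using spectral_gap_poincare(1) spectral_gap_poincare(2)[of u] centered
      by (auto simp: dirichlet_u)
    then show ?thesis
      using pi_pos by (simp add: dirichlet_u less_imp_le pinner_le_div_of_coercive)
  qed
  moreover have "\<pi> v * g v * g v = (\<xi> v / sqrt (\<pi> v))\<^sup>2" for v
    using pi_pos[of v] by (simp add: g_def power_divide power2_eq_square field_simps)
  then have "pinner \<pi> g g = (\<Sum>v\<in>UNIV. (\<xi> v / sqrt (\<pi> v))\<^sup>2)"
    by (simp add: pinner_def)
  moreover have "R_eff P \<pi> \<xi> \<le> ereal (dirichlet P \<pi> u)"
    using stochastic reversible pi_pos u by (rule R_eff_le_dirichlet)
  ultimately show ?thesis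
    by (auto elim!: order_trans)
qed

end

theorem lemma3p2:
  fixes P :: "'v::finite \<Rightarrow> 'v \<Rightarrow> real" and \<pi> \<xi> :: "'v \<Rightarrow> real"
  assumes "row_stochastic P" and "irreducible P"
    and "stationary_dist P \<pi>" and "reversible P \<pi>"
    and "(\<Sum>v\<in>UNIV. \<xi> v) = 0"
  shows "(\<forall>t::nat. t \<ge> 1 \<longrightarrow> R_eff P \<pi> \<xi> \<le> ereal (real t) * R_eff (mat_pow P t) \<pi> \<xi>)
    \<and> R_eff P \<pi> \<xi> \<le> ereal ((\<Sum>v\<in>UNIV. (\<xi> v / sqrt (\<pi> v))\<^sup>2) / spectral_gap P)"
proof -
  interpret irreducible_chain P \<pi>
    using assms(1-4) by unfold_locales
  show ?thesis
    using R_eff_le_mult_R_eff_mat_pow[OF assms(5)] R_eff_le_spectral_gap[OF assms(5)] by blast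
qed

end
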